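(* Suppose $G$ is a graph which is not bipartite and which $(\Delta,\beta,d,k)$-expands into $W\subseteq V(G)$, where $\Delta\geq 4$, $k\geq 2$ and $\beta\geq 8\Delta$. Then $G$ contains an odd cycle $C$ of length at most $88\log k\log|G|$ such that $G$ also $(\Delta-3,\beta,d,k)$-expands into $W\setminus V(C)$.
   Context: All logarithms are natural; $|G|$ is the number of vertices. For $S\subseteq V(G)$, $N_G(S)=\{w\in V(G)\setminus S: vw\in E(G)\text{ for some }v\in S\}$. A graph $G$ $(\Delta,\beta,d,k)$-expands into $W\subseteq V(G)$ if (a) $|N_G(S)\cap W|\geq\Delta|S|$ for every $S\subseteq V(G)$ with $|S|\leq\beta d$, and (b) $|N_G(S)|\geq|S|/(10\log k)$ for every $S\subseteq V(G)$ with $\beta d\leq|S|\leq|G|/2$. *)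

theory Defs
  imports Complex_Main
begin

definition simple_graph :: "'a set \<Rightarrow> 'a set set \<Rightarrow> bool" where
  "simple_graph V E \<longleftrightarrow> finite V \<and> (\<forall>e\<in>E. \<exists>u v. e = {u, v} \<and> u \<noteq> v \<and> u \<in> V \<and> v \<in> V)"

definition adj :: "'a set set \<Rightarrow> 'a \<Rightarrow> 'a \<Rightarrow> bool" where
  "adj E u v \<longleftrightarrow> {u, v} \<in> E"

definition nbhd :: "'a set \<Rightarrow> 'a set set \<Rightarrow> 'a set \<Rightarrow> 'a set" where
  "nbhd V E S = {w \<in> V - S. \<exists>v\<in>S. adj E v w}"

definition bipartite :: "'a set \<Rightarrow> 'a set set \<Rightarrow> bool" where
  "bipartite V E \<longleftrightarrow> (\<exists>A B. A \<union> B = V \<and> A \<inter> B = {} \<and>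
      (\<forall>u v. adj E u v \<longrightarrow> (u \<in> A \<and> v \<in> B) \<or> (u \<in> B \<and> v \<in> A)))"

definition expands_into ::
  "'a set \<Rightarrow> 'a set set \<Rightarrow> real \<Rightarrow> real \<Rightarrow> real \<Rightarrow> real \<Rightarrow> 'a set \<Rightarrow> bool" where
  "expands_into V E \<Delta> \<beta> d k W \<longleftrightarrow>
     (\<forall>S. S \<subseteq> V \<and> real (card S) \<le> \<beta> * d \<longrightarrow>
          real (card (nbhd V E S \<inter> W)) \<ge> \<Delta> * real (card S)) \<and>
     (\<forall>S. S \<subseteq> V \<and> \<beta> * d \<le> real (card S) \<and> real (card S) \<le> real (card V) / 2 \<longrightarrow>
          real (card (nbhd V E S)) \<ge> real (card S) / (10 * ln k))"

text \<open>A cycle given by its cyclic vertex sequence; its length is the number of vertices.\<close>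
definition is_cycle :: "'a set \<Rightarrow> 'a set set \<Rightarrow> 'a list \<Rightarrow> bool" where
  "is_cycle V E cs \<longleftrightarrow> length cs \<ge> 3 \<and> distinct cs \<and> set cs \<subseteq> V \<and>
     (\<forall>i < length cs. adj E (cs ! i) (cs ! ((i + 1) mod length cs)))"

end

theory Submission
  imports Defs
begin

text \<open>
  With \<open>x = 1 / (10 ln k)\<close>, the expansion hypotheses give \<open>|N(S)| \<ge> x |S|\<close> for every
  \<open>S\<close> of at most half the vertices. Hence balls grow by a factor \<open>1 + x\<close> per step until they
  exceed \<open>n / 2\<close>, so two balls of radius \<open>R = \<lceil>ln n / ln (1 + x)\<rceil>\<close> always meet and the
  diameter is at most \<open>2 R\<close>. Since the graph is not bipartite, some edge joins two vertices at
  equal distance from a root, which closes an odd walk, and therefore an odd cycle, of length at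
  most \<open>4 R + 1 \<le> 88 ln k ln n\<close>. Take a shortest odd cycle \<open>C\<close>: if a vertex had two
  neighbours on \<open>C\<close> at cyclic distance other than \<open>2\<close> or \<open>|C| - 2\<close>, one of the two arcs
  between them together with the vertex would give a shorter odd closed walk. So every vertex
  has at most three neighbours on \<open>C\<close>, and removing \<open>V(C)\<close> from \<open>W\<close> costs each \<open>S\<close> at most
  \<open>3 |S|\<close> neighbours.
\<close>

section \<open>Walks\<close>

lemma adj_sym: "adj E u v \<Longrightarrow> adj E v u"
  unfolding adj_def by (simp add: insert_commute)

lemma simple_graph_adjD:
  "simple_graph V E \<Longrightarrow> adj E u v \<Longrightarrow> u \<in> V \<and> v \<in> V \<and> u \<noteq> v"
  unfolding simple_graph_def adj_def by (smt (verit) doubleton_eq_iff insert_absorb2)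

definition walk :: "'a set set \<Rightarrow> (nat \<Rightarrow> 'a) \<Rightarrow> nat \<Rightarrow> bool" where
  "walk E f n \<longleftrightarrow> (\<forall>i<n. adj E (f i) (f (Suc i)))"

definition has_walk :: "'a set set \<Rightarrow> 'a \<Rightarrow> 'a \<Rightarrow> nat \<Rightarrow> bool" where
  "has_walk E u v n \<longleftrightarrow> (\<exists>f. walk E f n \<and> f 0 = u \<and> f n = v)"

lemma walk_shift: "walk E f n \<Longrightarrow> i + m \<le> n \<Longrightarrow> walk E (\<lambda>j. f (i + j)) m"
  unfolding walk_def by simp

lemma walk_append:
  assumes "walk E f m" "walk E g n" "f m = g 0"
  shows "walk E (\<lambda>i. if i \<le> m then f i else g (i - m)) (m + n)"
  unfolding walk_def
proof (intro allI impI)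
  fix i assume "i < m + n"
  then consider "i < m" | "i = m" "0 < n" | "m < i" "i - m < n" by linarith
  then show "adj E (if i \<le> m then f i else g (i - m)) (if Suc i \<le> m then f (Suc i) else g (Suc i - m))"
  proof cases
    case 3
    then have "Suc i - m = Suc (i - m)" by simp
    then show ?thesis using 3 assms(2) unfolding walk_def by simp
  qed (use assms in \<open>auto simp: walk_def\<close>)
qed

lemma walk_reverse: "walk E f n \<Longrightarrow> walk E (\<lambda>i. f (n - i)) n"
  unfolding walk_def
proof (intro allI impI)
  fix i assume "\<forall>i<n. adj E (f i) (f (Suc i))" "i < n"
  then have "adj E (f (n - Suc i)) (f (Suc (n - Suc i)))" by simp
  moreover have "Suc (n - Suc i) = n - i" using \<open>i < n\<close> by simp
  ultimately show "adj E (f (n - i)) (f (n - Suc i))" using adj_sym by metis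
qed

lemma has_walk_1: "adj E u v \<Longrightarrow> has_walk E u v 1"
  unfolding has_walk_def walk_def by (intro exI[of _ "\<lambda>i. if i = 0 then u else v"]) simp

lemma has_walk_trans:
  assumes "has_walk E u v m" "has_walk E v w n"
  shows "has_walk E u w (m + n)"
proof -
  obtain f g where "walk E f m" "f 0 = u" "f m = v" "walk E g n" "g 0 = v" "g n = w"
    using assms unfolding has_walk_def by blast
  then show ?thesis
    unfolding has_walk_def using walk_append[of E f m g n]
    by (intro exI[of _ "\<lambda>i. if i \<le> m then f i else g (i - m)"]) auto
qed

lemma has_walk_sym: "has_walk E u v n \<Longrightarrow> has_walk E v u n"
  unfolding has_walk_def using walk_reverse by fastforce

lemma has_walk_in_V:
  assumes "simple_graph V E" "u \<in> V" "has_walk E u v n"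
  shows "v \<in> V"
proof (cases n)
  case (Suc m)
  obtain f where "walk E f n" "f n = v" using assms(3) unfolding has_walk_def by blast
  then have "adj E (f m) v" using Suc unfolding walk_def by auto
  then show ?thesis using simple_graph_adjD[OF assms(1)] by blast
qed (use assms in \<open>auto simp: has_walk_def\<close>)

section \<open>Odd closed walks and shortest odd cycles\<close>

lemma cycle_of_injective_closed_walk:
  assumes "simple_graph V E" "walk E f p" "f p = f 0" "inj_on f {0..<p}" "p \<ge> 3"
  shows "is_cycle V E (map f [0..<p])"
  unfolding is_cycle_def
proof (intro conjI allI impI)
  show "set (map f [0..<p]) \<subseteq> V"
    using assms(2,5) simple_graph_adjD[OF assms(1)] unfolding walk_def
    by (auto simp: Suc_le_eq)
  fix i assume "i < length (map f [0..<p])"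
  then have "i < p" by simp
  moreover have "f ((i + 1) mod p) = f (Suc i)"
    using \<open>i < p\<close> assms(3) by (cases "Suc i = p") auto
  ultimately show "adj E (map f [0..<p] ! i) (map f [0..<p] ! ((i + 1) mod length (map f [0..<p])))"
    using assms(2) unfolding walk_def by simp
qed (use assms in \<open>auto simp: distinct_map\<close>)

lemma closed_walk_split:
  assumes "walk E f p" "f p = f 0" "i < j" "j < p" "f i = f j"
  shows "walk E (\<lambda>n. f (i + n)) (j - i)"
    and "walk E (\<lambda>n. if n \<le> i then f n else f (n + (j - i))) (p - (j - i))"
proof -
  show "walk E (\<lambda>n. f (i + n)) (j - i)" using walk_shift[OF assms(1)] assms(3,4) by simp
  have "walk E (\<lambda>n. f (j + n)) (p - j)" using walk_shift[OF assms(1)] assms(4) by simp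
  from walk_append[OF walk_shift[OF assms(1), of 0 i] this]
  show "walk E (\<lambda>n. if n \<le> i then f n else f (n + (j - i))) (p - (j - i))"
    using assms(3-5) by (simp add: algebra_simps cong: if_cong)
qed

lemma odd_closed_walk_imp_odd_cycle:
  assumes "simple_graph V E"
  shows "walk E f p \<Longrightarrow> f p = f 0 \<Longrightarrow> odd p \<Longrightarrow>
    \<exists>C. is_cycle V E C \<and> odd (length C) \<and> length C \<le> p"
proof (induction p arbitrary: f rule: less_induct)
  case (less p)
  show ?case
  proof (cases "inj_on f {0..<p}")
    case True
    have "p \<noteq> 1"
      using less.prems(1,2) simple_graph_adjD[OF assms] unfolding walk_def by force
    then have "p \<ge> 3" using \<open>odd p\<close> by presburger
    then show ?thesis
      using cycle_of_injective_closed_walk[OF assms less.prems(1,2) True] less.prems(3)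
      by (intro exI[of _ "map f [0..<p]"]) simp
  next
    case False
    then obtain i j where ij: "i < j" "j < p" "f i = f j"
      unfolding inj_on_def by (metis atLeastLessThan_iff linorder_neqE_nat)
    note walks = closed_walk_split[OF less.prems(1,2) ij]
    show ?thesis
    proof (cases "odd (j - i)")
      case True
      then show ?thesis using less.IH[OF _ walks(1)] ij by fastforce
    next
      case False
      then have "odd (p - (j - i))" using ij \<open>odd p\<close> by auto
      moreover have "\<not> p - (j - i) \<le> i" "p - (j - i) + (j - i) = p" using ij by auto
      ultimately show ?thesis using less.IH[OF _ walks(2)] ij less.prems(2) by fastforce
    qed
  qed
qed

lemma has_walk_odd_closed_imp_odd_cycle:
  "simple_graph V E \<Longrightarrow> has_walk E v v p \<Longrightarrow> odd p \<Longrightarrow>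
    \<exists>C. is_cycle V E C \<and> odd (length C) \<and> length C \<le> p"
  unfolding has_walk_def using odd_closed_walk_imp_odd_cycle by metis

lemma is_cycle_has_walk:
  assumes "is_cycle V E C" "s \<le> t"
  shows "has_walk E (C ! (s mod length C)) (C ! (t mod length C)) (t - s)"
proof -
  have "length C > 0" using assms(1) unfolding is_cycle_def by auto
  have "walk E (\<lambda>n. C ! ((s + n) mod length C)) (t - s)"
    unfolding walk_def
  proof (intro allI impI)
    fix i
    have "(s + i) mod length C < length C" using \<open>length C > 0\<close> by simp
    then have "adj E (C ! ((s + i) mod length C)) (C ! (((s + i) mod length C + 1) mod length C))"
      using assms(1) unfolding is_cycle_def by blast
    then show "adj E (C ! ((s + i) mod length C)) (C ! ((s + Suc i) mod length C))"
      by (simp add: mod_Suc_eq)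
  qed
  then show ?thesis
    unfolding has_walk_def using assms(2) by (intro exI[of _ "\<lambda>n. C ! ((s + n) mod length C)"]) simp
qed

lemma is_cycle_length_le_card:
  assumes "is_cycle V E C" "finite V"
  shows "length C \<le> card V"
proof -
  have "length C = card (set C)" using assms(1) unfolding is_cycle_def by (simp add: distinct_card)
  also have "\<dots> \<le> card V" using assms unfolding is_cycle_def by (intro card_mono) auto
  finally show ?thesis .
qed

definition shortest_odd_cycle :: "'a set \<Rightarrow> 'a set set \<Rightarrow> 'a list \<Rightarrow> bool" where
  "shortest_odd_cycle V E C \<longleftrightarrow> is_cycle V E C \<and> odd (length C) \<and>
     (\<forall>C'. is_cycle V E C' \<and> odd (length C') \<longrightarrow> length C \<le> length C')"

lemma shortest_odd_cycle_exists:
  assumes "is_cycle V E C" "odd (length C)"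
  shows "\<exists>C'. shortest_odd_cycle V E C' \<and> length C' \<le> length C"
  using ex_has_least_nat[of "\<lambda>C. is_cycle V E C \<and> odd (length C)" C length] assms
  unfolding shortest_odd_cycle_def by blast

lemma shortest_odd_cycle_arc:
  assumes "simple_graph V E" "shortest_odd_cycle V E C" "s \<le> t"
    and "adj E y (C ! (s mod length C))" "adj E y (C ! (t mod length C))" "odd (t - s + 2)"
  shows "length C \<le> t - s + 2"
proof -
  have "is_cycle V E C" using assms(2) unfolding shortest_odd_cycle_def by simp
  from has_walk_trans[OF has_walk_trans[OF has_walk_1[OF assms(4)] is_cycle_has_walk[OF this assms(3)]]
      has_walk_1[OF adj_sym[OF assms(5)]]]
  have "has_walk E y y (t - s + 2)" by simp
  then show ?thesis
    using has_walk_odd_closed_imp_odd_cycle[OF assms(1)] assms(2,6)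
    unfolding shortest_odd_cycle_def by fastforce
qed

text \<open>Two neighbours of \<open>y\<close> at cyclic distance \<open>d\<close> on an odd cycle of length \<open>L\<close> give closed
  walks through \<open>y\<close> of lengths \<open>d + 2\<close> and \<open>L - d + 2\<close>, exactly one of which is odd.\<close>
lemma odd_arc_lengths:
  "odd (L::nat) \<Longrightarrow> 0 < d \<Longrightarrow> d < L \<Longrightarrow> (odd d \<longrightarrow> L \<le> d + 2) \<Longrightarrow>
    (even d \<longrightarrow> L \<le> L - d + 2) \<Longrightarrow> d = 2 \<or> d = L - 2"
  by presburger

lemma shortest_odd_cycle_card_neighbours:
  assumes "simple_graph V E" "shortest_odd_cycle V E C"
  shows "card {c \<in> set C. adj E y c} \<le> 3"
proof -
  define L where "L = length C"
  have "odd L" using assms(2) unfolding shortest_odd_cycle_def L_def by simp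
  define I where "I = {i. i < L \<and> adj E y (C ! i)}"
  have "finite I" unfolding I_def by simp
  have gap: "b = a + 2 \<or> b = a + L - 2" if "a \<in> I" "b \<in> I" "a < b" for a b
  proof -
    have "odd (b - a) \<longrightarrow> L \<le> b - a + 2"
      using shortest_odd_cycle_arc[OF assms, of a b y] that unfolding I_def L_def by auto
    moreover have "even (b - a) \<longrightarrow> L \<le> L - (b - a) + 2"
      using shortest_odd_cycle_arc[OF assms, of b "a + L" y] that \<open>odd L\<close>
      unfolding I_def L_def by auto
    moreover have "b - a < L" using that unfolding I_def by auto
    ultimately have "b - a = 2 \<or> b - a = L - 2"
      using odd_arc_lengths[OF \<open>odd L\<close>, of "b - a"] \<open>a < b\<close> by auto
    then show ?thesis using \<open>a < b\<close> by linarith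
  qed
  have three: "I \<subseteq> {Min I, Min I + 2, Min I + L - 2}" if "I \<noteq> {}"
  proof
    fix i assume "i \<in> I"
    then have "Min I \<le> i" "Min I \<in> I" using \<open>finite I\<close> that by auto
    then show "i \<in> {Min I, Min I + 2, Min I + L - 2}"
      using gap[of "Min I" i] \<open>i \<in> I\<close> by (cases "Min I = i") auto
  qed
  have "card I \<le> 3"
  proof (cases "I = {}")
    case False
    then have "card I \<le> card {Min I, Min I + 2, Min I + L - 2}"
      using three by (intro card_mono) auto
    also have "\<dots> \<le> 3" by (simp add: card_insert_if)
    finally show ?thesis .
  qed simp
  moreover have "{c \<in> set C. adj E y c} = (\<lambda>i. C ! i) ` I"
    unfolding I_def L_def by (auto simp: in_set_conv_nth)
  ultimately show ?thesis using card_image_le[OF \<open>finite I\<close>, of "\<lambda>i. C ! i"] by simp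
qed

section \<open>Expansion, balls and the diameter\<close>

lemma expands_into_Diff:
  assumes "finite V" "finite X" "expands_into V E \<Delta> \<beta> d k W"
    and "\<And>y. card {c \<in> X. adj E y c} \<le> t"
  shows "expands_into V E (\<Delta> - real t) \<beta> d k (W - X)"
  unfolding expands_into_def
proof (intro conjI allI impI)
  fix S assume S: "S \<subseteq> V \<and> real (card S) \<le> \<beta> * d"
  define A where "A = nbhd V E S \<inter> W"
  have "finite S" using S assms(1) by (meson finite_subset)
  have "finite A" using assms(1) unfolding A_def nbhd_def by simp
  have "card (A \<inter> X) \<le> card (\<Union>y\<in>S. {c \<in> X. adj E y c})"
    using \<open>finite S\<close> assms(2) unfolding A_def nbhd_def by (intro card_mono) auto
  also have "\<dots> \<le> (\<Sum>y\<in>S. card {c \<in> X. adj E y c})" using \<open>finite S\<close> by (rule card_UN_le)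
  also have "\<dots> \<le> card S * t" using sum_bounded_above[of S "\<lambda>y. card {c \<in> X. adj E y c}" t] assms(4) by simp
  finally have "real (card (A \<inter> X)) \<le> real t * real (card S)"
    by (simp add: mult.commute flip: of_nat_mult)
  moreover have "\<Delta> * real (card S) \<le> real (card A)"
    using assms(3) S unfolding expands_into_def A_def by blast
  moreover have "card (A - A \<inter> X) = card A - card (A \<inter> X)" "card (A \<inter> X) \<le> card A"
    using \<open>finite A\<close> by (auto intro: card_Diff_subset card_mono)
  moreover have "nbhd V E S \<inter> (W - X) = A - A \<inter> X" unfolding A_def by auto
  ultimately show "(\<Delta> - real t) * real (card S) \<le> real (card (nbhd V E S \<inter> (W - X)))"
    by (simp add: of_nat_diff algebra_simps)
next
  fix S assume "S \<subseteq> V \<and> \<beta> * d \<le> real (card S) \<and> real (card S) \<le> real (card V) / 2"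
  then show "real (card S) / (10 * ln k) \<le> real (card (nbhd V E S))"
    using assms(3) unfolding expands_into_def by blast
qed

definition vertex_expansion :: "'a set \<Rightarrow> 'a set set \<Rightarrow> real \<Rightarrow> bool" where
  "vertex_expansion V E x \<longleftrightarrow> (\<forall>S \<subseteq> V. real (card S) \<le> real (card V) / 2 \<longrightarrow>
     x * real (card S) \<le> real (card (nbhd V E S)))"

lemma expands_into_imp_vertex_expansion:
  assumes "finite V" "expands_into V E \<Delta> \<beta> d k W" "1 / (10 * ln k) \<le> \<Delta>"
  shows "vertex_expansion V E (1 / (10 * ln k))"
  unfolding vertex_expansion_def
proof (intro allI impI)
  fix S assume S: "S \<subseteq> V" "real (card S) \<le> real (card V) / 2"
  show "1 / (10 * ln k) * real (card S) \<le> real (card (nbhd V E S))"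
  proof (cases "real (card S) \<le> \<beta> * d")
    case True
    have "card (nbhd V E S \<inter> W) \<le> card (nbhd V E S)"
      using assms(1) unfolding nbhd_def by (intro card_mono) auto
    moreover have "1 / (10 * ln k) * real (card S) \<le> \<Delta> * real (card S)"
      using assms(3) by (intro mult_right_mono) auto
    moreover have "\<Delta> * real (card S) \<le> real (card (nbhd V E S \<inter> W))"
      using assms(2) S(1) True unfolding expands_into_def by blast
    ultimately show ?thesis by linarith
  next
    case False
    then have "\<beta> * d \<le> real (card S)" by simp
    then have "real (card S) / (10 * ln k) \<le> real (card (nbhd V E S))"
      using assms(2) S unfolding expands_into_def by blast
    then show ?thesis by simp
  qed
qed

definition walk_ball :: "'a set set \<Rightarrow> 'a \<Rightarrow> nat \<Rightarrow> 'a set" where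
  "walk_ball E v r = {x. \<exists>n\<le>r. has_walk E v x n}"

lemma walk_ball_subset:
  assumes "simple_graph V E" "v \<in> V"
  shows "walk_ball E v r \<subseteq> V"
  unfolding walk_ball_def using has_walk_in_V[OF assms] by blast

lemma finite_walk_ball:
  assumes "simple_graph V E" "v \<in> V"
  shows "finite (walk_ball E v r)"
  using finite_subset[OF walk_ball_subset[OF assms]] assms(1) unfolding simple_graph_def by simp

lemma walk_ball_mono: "r \<le> s \<Longrightarrow> walk_ball E v r \<subseteq> walk_ball E v s"
  unfolding walk_ball_def by (auto intro: order.trans)

lemma walk_ball_0: "walk_ball E v 0 = {v}"
  unfolding walk_ball_def has_walk_def walk_def by auto

lemma walk_ball_Suc: "walk_ball E v r \<union> nbhd V E (walk_ball E v r) \<subseteq> walk_ball E v (Suc r)"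
proof -
  have "nbhd V E (walk_ball E v r) \<subseteq> walk_ball E v (Suc r)"
  proof
    fix y assume "y \<in> nbhd V E (walk_ball E v r)"
    then obtain x n where "n \<le> r" "has_walk E v x n" "adj E x y"
      unfolding nbhd_def walk_ball_def by blast
    then have "has_walk E v y (n + 1)" by (intro has_walk_trans has_walk_1)
    then show "y \<in> walk_ball E v (Suc r)"
      unfolding walk_ball_def using \<open>n \<le> r\<close> by auto
  qed
  then show ?thesis using walk_ball_mono[of r "Suc r"] by simp
qed

lemma card_walk_ball_Suc:
  assumes "simple_graph V E" "v \<in> V"
  shows "card (walk_ball E v r) + card (nbhd V E (walk_ball E v r)) \<le> card (walk_ball E v (Suc r))"
proof -
  have fin: "finite (walk_ball E v (Suc r))" using finite_walk_ball[OF assms] .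
  have "card (walk_ball E v r) + card (nbhd V E (walk_ball E v r))
      = card (walk_ball E v r \<union> nbhd V E (walk_ball E v r))"
    using finite_subset[OF walk_ball_Suc fin]
    by (intro card_Un_disjoint[symmetric]) (auto simp: nbhd_def)
  also have "\<dots> \<le> card (walk_ball E v (Suc r))" by (rule card_mono[OF fin walk_ball_Suc])
  finally show ?thesis .
qed

lemma walk_ball_growth:
  assumes "simple_graph V E" "vertex_expansion V E x" "0 \<le> x" "v \<in> V"
  shows "real (card (walk_ball E v r)) \<le> real (card V) / 2 \<Longrightarrow> (1 + x) ^ r \<le> card (walk_ball E v r)"
proof (induction r)
  case (Suc r)
  have "card (walk_ball E v r) \<le> card (walk_ball E v (Suc r))"
    by (intro card_mono finite_walk_ball[OF assms(1,4)] walk_ball_mono) simp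
  then have small: "real (card (walk_ball E v r)) \<le> real (card V) / 2" using Suc.prems by linarith
  have "(1 + x) ^ Suc r \<le> (1 + x) * real (card (walk_ball E v r))"
    using Suc.IH[OF small] assms(3) by (simp add: mult_left_mono)
  also have "\<dots> \<le> real (card (walk_ball E v r)) + real (card (nbhd V E (walk_ball E v r)))"
    using assms(2) small walk_ball_subset[OF assms(1,4)]
    unfolding vertex_expansion_def by (simp add: algebra_simps)
  also have "\<dots> \<le> real (card (walk_ball E v (Suc r)))"
    using card_walk_ball_Suc[OF assms(1,4), of r] by linarith
  finally show ?case .
qed (simp add: walk_ball_0)

lemma vertex_expansion_short_walk:
  assumes "simple_graph V E" "vertex_expansion V E x" "0 \<le> x" "real (card V) \<le> (1 + x) ^ r"
    and "u \<in> V" "v \<in> V"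
  shows "\<exists>m \<le> 2 * r. has_walk E u v m"
proof -
  have "card V > 0" using assms(1,5) unfolding simple_graph_def by (auto simp: card_gt_0_iff)
  then have big: "real (card V) / 2 < real (card (walk_ball E w r))" if "w \<in> V" for w
    using walk_ball_growth[OF assms(1-3) that, of r] assms(4) by linarith
  have "walk_ball E u r \<inter> walk_ball E v r \<noteq> {}"
  proof
    assume "walk_ball E u r \<inter> walk_ball E v r = {}"
    then have "card (walk_ball E u r) + card (walk_ball E v r) = card (walk_ball E u r \<union> walk_ball E v r)"
      using finite_walk_ball[OF assms(1)] assms(5,6) by (simp add: card_Un_disjoint)
    also have "\<dots> \<le> card V"
      using walk_ball_subset[OF assms(1)] assms(1,5,6) unfolding simple_graph_def
      by (intro card_mono) auto
    finally show False using big[OF assms(5)] big[OF assms(6)] by linarith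
  qed
  then obtain w m1 m2 where "m1 \<le> r" "m2 \<le> r" "has_walk E u w m1" "has_walk E v w m2"
    unfolding walk_ball_def by blast
  then show ?thesis using has_walk_trans[OF _ has_walk_sym] by (intro exI[of _ "m1 + m2"]) auto
qed

section \<open>Non-bipartite graphs of small diameter\<close>

lemma bipartite_if_odd_edge_sums:
  assumes "simple_graph V E" "\<And>u w. adj E u w \<Longrightarrow> odd (h u + h w :: nat)"
  shows "bipartite V E"
  unfolding bipartite_def
proof (intro exI conjI allI impI)
  fix u w assume "adj E u w"
  then show "(u \<in> {v \<in> V. even (h v)} \<and> w \<in> {v \<in> V. odd (h v)}) \<or>
      (u \<in> {v \<in> V. odd (h v)} \<and> w \<in> {v \<in> V. even (h v)})"
    using assms(2)[of u w] simple_graph_adjD[OF assms(1)] by auto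
qed auto

definition walk_dist :: "'a set set \<Rightarrow> 'a \<Rightarrow> 'a \<Rightarrow> nat" where
  "walk_dist E u v = (LEAST m. has_walk E u v m)"

lemma has_walk_walk_dist:
  "has_walk E u v m \<Longrightarrow> has_walk E u v (walk_dist E u v) \<and> walk_dist E u v \<le> m"
  unfolding walk_dist_def using LeastI[of "has_walk E u v" m] Least_le[of "has_walk E u v" m] by simp

lemma walk_dist_adj_le:
  assumes "has_walk E u x m" "adj E x y"
  shows "walk_dist E u y \<le> walk_dist E u x + 1"
proof -
  have "has_walk E u y (walk_dist E u x + 1)"
    using has_walk_walk_dist[OF assms(1)] has_walk_trans[OF _ has_walk_1[OF assms(2)]] by blast
  then show ?thesis by (rule has_walk_walk_dist[THEN conjunct2])
qed

lemma not_bipartite_imp_edge_within_layer: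
  assumes "simple_graph V E" "\<not> bipartite V E" "\<And>y. y \<in> V \<Longrightarrow> \<exists>m. has_walk E v y m"
  shows "\<exists>x y. adj E x y \<and> walk_dist E v x = walk_dist E v y"
proof (rule ccontr)
  assume no_edge: "\<nexists>x y. adj E x y \<and> walk_dist E v x = walk_dist E v y"
  have "odd (walk_dist E v x + walk_dist E v y)" if xy: "adj E x y" for x y
  proof -
    obtain mx my where walks: "has_walk E v x mx" "has_walk E v y my"
      using assms(3) simple_graph_adjD[OF assms(1) xy] by blast
    have "walk_dist E v y \<le> walk_dist E v x + 1" "walk_dist E v x \<le> walk_dist E v y + 1"
      using walk_dist_adj_le[OF walks(1) xy] walk_dist_adj_le[OF walks(2) adj_sym[OF xy]] by auto
    then have "walk_dist E v y = walk_dist E v x + 1 \<or> walk_dist E v x = walk_dist E v y + 1"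
      using no_edge xy by fastforce
    then show ?thesis by auto
  qed
  then show False using bipartite_if_odd_edge_sums[OF assms(1)] assms(2) by blast
qed

lemma odd_cycle_if_not_bipartite:
  assumes "simple_graph V E" "\<not> bipartite V E"
    and "\<And>u v. u \<in> V \<Longrightarrow> v \<in> V \<Longrightarrow> \<exists>m \<le> D. has_walk E u v m"
  shows "\<exists>C. is_cycle V E C \<and> odd (length C) \<and> length C \<le> 2 * D + 1"
proof -
  \<comment> \<open>without edges, the constant labelling would witness bipartiteness\<close>
  obtain v where "v \<in> V"
    using assms(2) bipartite_if_odd_edge_sums[OF assms(1), of "\<lambda>_. 0"] simple_graph_adjD[OF assms(1)]
    by blast
  then obtain x y where xy: "adj E x y" "walk_dist E v x = walk_dist E v y"
    using not_bipartite_imp_edge_within_layer[OF assms(1,2)] assms(3) by blast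
  have dist: "has_walk E v z (walk_dist E v z) \<and> walk_dist E v z \<le> D" if "z \<in> V" for z
    using assms(3)[OF \<open>v \<in> V\<close> that] has_walk_walk_dist by fastforce
  have "x \<in> V" "y \<in> V" using simple_graph_adjD[OF assms(1) xy(1)] by auto
  then have "has_walk E v v (walk_dist E v x + 1 + walk_dist E v y)"
    using dist has_walk_trans[OF has_walk_trans[OF _ has_walk_1[OF xy(1)]] has_walk_sym] by blast
  moreover have "odd (walk_dist E v x + 1 + walk_dist E v y)"
    "walk_dist E v x + 1 + walk_dist E v y \<le> 2 * D + 1"
    using dist[OF \<open>x \<in> V\<close>] xy(2) by auto
  ultimately show ?thesis
    using has_walk_odd_closed_imp_odd_cycle[OF assms(1)] by fastforce
qed

section \<open>The length estimate\<close>

lemma ln_ge_half: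
  assumes "2 \<le> (k :: real)"
  shows "1 / 2 \<le> ln k"
proof -
  have "1 / 2 \<le> ln (2 :: real)" using ln_diff_le[of 1 2] by simp
  also have "\<dots> \<le> ln k" using assms by simp
  finally show ?thesis .
qed

lemma ln_one_plus_ge:
  assumes "0 \<le> x" "x \<le> 1 / 5"
  shows "4 / 5 * x \<le> ln (1 + x :: real)"
proof -
  have "x * x \<le> x * (1 / 5)" using assms by (intro mult_left_mono)
  then have "4 / 5 * x \<le> x - x\<^sup>2" by (simp add: power2_eq_square)
  also have "\<dots> \<le> ln (1 + x)" using assms by (intro ln_one_plus_pos_lower_bound) auto
  finally show ?thesis .
qed

lemma le_power_nat_ceiling_ln:
  fixes n b :: real
  assumes "0 \<le> n" "1 < b"
  shows "n \<le> b ^ nat \<lceil>ln n / ln b\<rceil>"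
proof (cases "n = 0")
  case False
  have "ln n / ln b \<le> real (nat \<lceil>ln n / ln b\<rceil>)" by (rule real_nat_ceiling_ge)
  then have "ln n \<le> real (nat \<lceil>ln n / ln b\<rceil>) * ln b"
    using assms(2) by (simp add: pos_divide_le_eq)
  then have "ln n \<le> ln (b ^ nat \<lceil>ln n / ln b\<rceil>)" using assms(2) by (simp add: ln_realpow)
  then show ?thesis using assms False by (subst (asm) ln_le_cancel_iff) auto
qed simp

lemma odd_cycle_length_estimate:
  fixes k n :: real
  assumes "2 \<le> k" "3 \<le> n"
  shows "4 * real (nat \<lceil>ln n / ln (1 + 1 / (10 * ln k))\<rceil>) + 1 \<le> 88 * ln k * ln n"
proof -
  define K where "K = ln k"
  define x where "x = 1 / (10 * K)"
  have "1 / 2 \<le> K" using ln_ge_half[OF assms(1)] unfolding K_def .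
  then have x: "0 < x" "x \<le> 1 / 5" unfolding x_def by (auto simp: field_simps)
  have "1 \<le> ln n" using exp_le assms(2) by (simp add: ln_ge_iff)
  have "ln n / ln (1 + x) \<le> ln n / (4 / 5 * x)"
    using ln_one_plus_ge[of x] x \<open>1 \<le> ln n\<close> by (intro divide_left_mono) auto
  also have "\<dots> = 25 / 2 * K * ln n" unfolding x_def using \<open>1 / 2 \<le> K\<close> by (simp add: field_simps)
  finally have "ln n / ln (1 + x) \<le> 25 / 2 * K * ln n" .
  moreover have "0 \<le> ln n / ln (1 + x)" using x \<open>1 \<le> ln n\<close> by simp
  ultimately have "real (nat \<lceil>ln n / ln (1 + x)\<rceil>) \<le> 25 / 2 * K * ln n + 1"
    using of_int_ceiling_le_add_one[of "ln n / ln (1 + x)"] by linarith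
  moreover have "1 / 2 \<le> K * ln n"
    using mult_mono[OF \<open>1 / 2 \<le> K\<close> \<open>1 \<le> ln n\<close>] \<open>1 / 2 \<le> K\<close> by simp
  ultimately show ?thesis unfolding K_def x_def by linarith
qed

theorem lemma4p4:
  fixes V :: "'a set" and E :: "'a set set" and W :: "'a set"
    and \<Delta> \<beta> d k :: real
  assumes "simple_graph V E"
    and "\<not> bipartite V E"
    and "W \<subseteq> V"
    and "expands_into V E \<Delta> \<beta> d k W"
    and "\<Delta> \<ge> 4" and "k \<ge> 2" and "\<beta> \<ge> 8 * \<Delta>"
  shows "\<exists>C. is_cycle V E C \<and> odd (length C) \<and>
           real (length C) \<le> 88 * ln k * ln (real (card V)) \<and>
           expands_into V E (\<Delta> - 3) \<beta> d k (W - set C)"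
proof -
  have "finite V" using assms(1) unfolding simple_graph_def by simp
  define x where "x = 1 / (10 * ln k)"
  have x: "0 < x" "x \<le> 1 / 5" using ln_ge_half[OF assms(6)] unfolding x_def by (auto simp: field_simps)
  have expansion: "vertex_expansion V E x"
    using expands_into_imp_vertex_expansion[OF \<open>finite V\<close> assms(4)] x assms(5)
    unfolding x_def by simp
  define R where "R = nat \<lceil>ln (card V) / ln (1 + x)\<rceil>"
  have "real (card V) \<le> (1 + x) ^ R" unfolding R_def using x by (intro le_power_nat_ceiling_ln) auto
  then have "\<exists>m \<le> 2 * R. has_walk E u v m" if "u \<in> V" "v \<in> V" for u v
    using vertex_expansion_short_walk[OF assms(1) expansion] x that by simp
  then obtain C0 where C0: "is_cycle V E C0" "odd (length C0)" "length C0 \<le> 2 * (2 * R) + 1"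
    using odd_cycle_if_not_bipartite[OF assms(1,2)] by blast
  then obtain C where C: "shortest_odd_cycle V E C" "length C \<le> 4 * R + 1"
    using shortest_odd_cycle_exists[OF C0(1,2)] by auto
  then have "is_cycle V E C" "odd (length C)" unfolding shortest_odd_cycle_def by auto
  then have "3 \<le> real (card V)"
    using is_cycle_length_le_card[OF _ \<open>finite V\<close>] unfolding is_cycle_def by fastforce
  have "real (length C) \<le> 88 * ln k * ln (real (card V))"
    using odd_cycle_length_estimate[OF assms(6) \<open>3 \<le> real (card V)\<close>] C(2) unfolding R_def x_def by linarith
  moreover have "expands_into V E (\<Delta> - 3) \<beta> d k (W - set C)"
    using expands_into_Diff[OF \<open>finite V\<close> _ assms(4), of "set C" 3]
      shortest_odd_cycle_card_neighbours[OF assms(1) C(1)] by simp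
  ultimately show ?thesis using \<open>is_cycle V E C\<close> \<open>odd (length C)\<close> by blast
qed

end
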